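(* Let $H\in(0,1)$ and let $f:[0,1]\to\mathbb R^n$ be piecewise linear with $f(0)=0$. Then $f\in\mathcal H_H$ and $\|f\|_{\mathcal H_H}\lesssim|\dot f|_\infty(1+|\mathcal D_{\dot f}|)$.
   Context: $\mathcal H_H$ is the Cameron–Martin space of the Riemann–Liouville process $\tilde B_t=\alpha_H\int_0^t(t-u)^{H-1/2}\,dW_u$, $t\in[0,1]$ ($W$ a standard Wiener process, $\alpha_H>0$ a constant): $\mathcal H_H=\mathscr K_H(H_0^1)$ where $H_0^1=\{\int_0^\cdot\dot f:\dot f\in L^2([0,1],\mathbb R^n)\}$ and $\mathscr K_Hf(t)=\alpha_H\int_0^t(t-s)^{H-3/2}f(s)\,ds$ for $H>\frac12$, $\mathscr K_Hf(t)=\alpha_H\frac{d}{dt}\int_0^t(t-s)^{H-1/2}f(s)\,ds$ for $H<\frac12$, with inner product $\langle\mathscr K_Hf,\mathscr K_Hg\rangle_{\mathcal H_H}=\langle\dot f,\dot g\rangle_{L^2}$. $\mathcal D_{\dot f}$ is the finite set of discontinuities of $\dot f$. $a\lesssim b$ means $a\le Cb$ with $C$ independent of $f$. *)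

theory Defs
  imports "HOL-Analysis.Analysis"
begin

definition L2_01 :: "(real \<Rightarrow> 'a::euclidean_space) \<Rightarrow> bool" where
  "L2_01 g \<longleftrightarrow> g absolutely_integrable_on {0..1} \<and>
                 (\<lambda>s. (norm (g s))^2) integrable_on {0..1}"

definition L2_norm01 :: "(real \<Rightarrow> 'a::euclidean_space) \<Rightarrow> real" where
  "L2_norm01 g = sqrt (integral {0..1} (\<lambda>s. (norm (g s))^2))"

text \<open>Primitive t |-> int_0^t g; elements of H_0^1 are the primitives of L^2 functions.\<close>
definition prim :: "(real \<Rightarrow> 'a::euclidean_space) \<Rightarrow> real \<Rightarrow> 'a" where
  "prim g = (\<lambda>t. integral {0..t} g)"

text \<open>The operator K_H (with constant alpha). For H > 1/2 the fractional integral,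
  for H <= 1/2 the derivative formula (which at H = 1/2 reduces to the identity times alpha).\<close>
definition KH :: "real \<Rightarrow> real \<Rightarrow> (real \<Rightarrow> 'a::euclidean_space) \<Rightarrow> real \<Rightarrow> 'a" where
  "KH \<alpha> H f = (\<lambda>t.
     if H > 1/2 then \<alpha> *\<^sub>R integral {0..t} (\<lambda>s. ((t - s) powr (H - 3/2)) *\<^sub>R f s)
     else \<alpha> *\<^sub>R vector_derivative
            (\<lambda>\<tau>. integral {0..\<tau>} (\<lambda>s. ((\<tau> - s) powr (H - 1/2)) *\<^sub>R f s))
            (at t within {0..1}))"

text \<open>Cameron--Martin space H_H = K_H(H_0^1), functions compared on [0,1].\<close>
definition CM :: "real \<Rightarrow> real \<Rightarrow> (real \<Rightarrow> 'a::euclidean_space) set" where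
  "CM \<alpha> H = {h. \<exists>g. L2_01 g \<and> (\<forall>t\<in>{0..1}. h t = KH \<alpha> H (prim g) t)}"

text \<open>Cameron--Martin norm: ||K_H f|| = ||f'||_{L^2} (infimum over preimages; K_H is injective,
  so this is the norm defined via the isometry).\<close>
definition CM_norm :: "real \<Rightarrow> real \<Rightarrow> (real \<Rightarrow> 'a::euclidean_space) \<Rightarrow> real" where
  "CM_norm \<alpha> H h = Inf {L2_norm01 g | g. L2_01 g \<and> (\<forall>t\<in>{0..1}. h t = KH \<alpha> H (prim g) t)}"

definition piecewise_linear01 :: "(real \<Rightarrow> 'a::euclidean_space) \<Rightarrow> bool" where
  "piecewise_linear01 f \<longleftrightarrow> (\<exists>ts::real list.
      length ts \<ge> 2 \<and> sorted_wrt (<) ts \<and> hd ts = 0 \<and> last ts = 1 \<and>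
      (\<forall>i < length ts - 1. \<exists>a b. \<forall>t\<in>{ts!i..ts!(i+1)}. f t = a + t *\<^sub>R b))"

definition fdot :: "(real \<Rightarrow> 'a::euclidean_space) \<Rightarrow> real \<Rightarrow> 'a" where
  "fdot f t = vector_derivative f (at t)"

definition sup_fdot :: "(real \<Rightarrow> 'a::euclidean_space) \<Rightarrow> real" where
  "sup_fdot f = Sup {norm (fdot f t) | t. t \<in> {0<..<1} \<and> f differentiable (at t)}"

definition disc_fdot :: "(real \<Rightarrow> 'a::euclidean_space) \<Rightarrow> real set" where
  "disc_fdot f = {t \<in> {0<..<1}. \<not> isCont (fdot f) t}"

end

theory Submission
  imports Defs
begin

text \<open>
  A piecewise linear f with f(0) = 0 is a sum of ramps (t - a)_+ d_a, one at the origin and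
  one at each kink a of f, where d_a is the jump of the slope at a, so |d_a| \<le> 2 |f'|_\<infinity>.
  By the Beta integral, each ramp (t - a)_+ is a fixed multiple of K_H applied to the primitive
  of (s - a)_+^(1/2 - H), and this power is square integrable on [0,1] with norm at most
  1/sqrt(2 - 2H). Hence f = K_H(\<integral>g) for a g whose L^2 norm is at most a constant times
  |f'|_\<infinity> times the number of ramps.
\<close>

section \<open>Truncated powers and the Beta integral\<close>

text \<open>ramp a q s is (s - a)_+^q; since 0 powr q = 0 it vanishes on s \<le> a for every q.\<close>

definition ramp :: "real \<Rightarrow> real \<Rightarrow> real \<Rightarrow> real" where
  "ramp a q s = (max (s - a) 0) powr q"

lemma ramp_nonneg: "0 \<le> ramp a q s"
  by (simp add: ramp_def)

lemma ramp_eq_0: "s \<le> a \<Longrightarrow> ramp a q s = 0"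
  by (simp add: ramp_def)

lemma ramp_eq_powr: "a \<le> s \<Longrightarrow> ramp a q s = (s - a) powr q"
  by (simp add: ramp_def)

lemma ramp_1: "ramp a 1 s = max (s - a) 0"
  by (simp add: ramp_def)

lemma ramp_2: "ramp a 2 s = (max (s - a) 0)\<^sup>2"
  by (cases "s \<le> a") (auto simp: ramp_def powr_numeral)

lemma ramp_power2: "(ramp a q s)\<^sup>2 = ramp a (2 * q) s"
  by (cases "s \<le> a") (auto simp: ramp_def powr_power)

lemma ramp_le_1: "0 \<le> a \<Longrightarrow> 0 \<le> q \<Longrightarrow> ramp a q 1 \<le> 1"
  unfolding ramp_def by (rule powr_le1) auto

lemma has_real_derivative_ramp_2: "((\<lambda>x. ramp a 2 x) has_real_derivative 2 * ramp a 1 t) (at t)"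
proof -
  consider "t < a" | "t = a" | "a < t" by linarith
  then show ?thesis
  proof cases
    case 1
    have "((\<lambda>x. 0) has_real_derivative 2 * ramp a 1 t) (at t)"
      using 1 by (simp add: ramp_1)
    then show ?thesis
      by (rule has_field_derivative_transform_within_open[of _ _ _ "{..<a}"])
         (use 1 in \<open>auto simp: ramp_eq_0\<close>)
  next
    case 3
    have "((\<lambda>x. (x - a)\<^sup>2) has_real_derivative 2 * ramp a 1 t) (at t)"
      using 3 by (auto intro!: derivative_eq_intros simp: ramp_1)
    then show ?thesis
      by (rule has_field_derivative_transform_within_open[of _ _ _ "{a<..}"])
         (use 3 in \<open>auto simp: ramp_2\<close>)
  next
    case 2
    have "((\<lambda>y. max (y - a) 0) \<longlongrightarrow> max (a - a) 0) (at a)"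
      by (intro tendsto_intros)
    then have "((\<lambda>y. max (y - a) 0) \<longlongrightarrow> 0) (at a)"
      by simp
    then have "((\<lambda>y. (ramp a 2 y - ramp a 2 a) / (y - a)) \<longlongrightarrow> 0) (at a)"
    proof (rule tendsto_cong[THEN iffD1, rotated])
      show "\<forall>\<^sub>F y in at a. max (y - a) 0 = (ramp a 2 y - ramp a 2 a) / (y - a)"
        unfolding eventually_at_filter ramp_2 power2_eq_square
        by (rule always_eventually) (auto simp: max_def)
    qed
    then show ?thesis
      using 2 by (simp add: has_field_derivative_iff ramp_1)
  qed
qed

lemma has_integral_Beta_shifted:
  fixes p q a t :: real
  assumes p: "p > -1" and q: "q > -1" and at: "a < t"
  shows "((\<lambda>s. (t - s) powr p * (s - a) powr q) has_integral
           (t - a) powr (p + q + 1) * Beta (q + 1) (p + 1)) {a..t}"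
proof -
  define L where "L = t - a"
  have L: "L > 0"
    using at by (simp add: L_def)
  have "((\<lambda>u. u powr (q + 1 - 1) * (1 - u) powr (p + 1 - 1)) has_integral Beta (q + 1) (p + 1))
          (cbox 0 1)"
    using has_integral_Beta_real[of "q + 1" "p + 1"] p q by simp
  then have "((\<lambda>s. ((1 / L) *\<^sub>R s + - a / L) powr (q + 1 - 1) *
           (1 - ((1 / L) *\<^sub>R s + - a / L)) powr (p + 1 - 1)) has_integral
           Beta (q + 1) (p + 1) /\<^sub>R (1 / L) ^ DIM(real))
          (cbox ((0 - - a / L) /\<^sub>R (1 / L)) ((1 - - a / L) /\<^sub>R (1 / L)))"
    by (rule has_integral_affinity') (use L in simp)
  also have "cbox ((0 - - a / L) /\<^sub>R (1 / L)) ((1 - - a / L) /\<^sub>R (1 / L)) = {a..t}"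
    using L by (simp add: L_def field_simps)
  finally have "((\<lambda>s. ((s - a) / L) powr q * ((t - s) / L) powr p) has_integral
      Beta (q + 1) (p + 1) /\<^sub>R (1 / L) ^ DIM(real)) {a..t}"
  proof (rule has_integral_cong[THEN iffD1, rotated])
    fix s
    have "(1 / L) *\<^sub>R s + - a / L = (s - a) / L"
      by (simp add: diff_divide_distrib)
    moreover have "1 - (s - a) / L = (t - s) / L"
      using L by (simp add: L_def field_simps)
    ultimately show "((1 / L) *\<^sub>R s + - a / L) powr (q + 1 - 1) * (1 - ((1 / L) *\<^sub>R s + - a / L)) powr (p + 1 - 1)
        = ((s - a) / L) powr q * ((t - s) / L) powr p"
      by simp
  qed
  from has_integral_mult_right[OF this, of "L powr (p + q)"]
  have "((\<lambda>s. (t - s) powr p * (s - a) powr q) has_integral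
      L powr (p + q) * (Beta (q + 1) (p + 1) /\<^sub>R (1 / L) ^ DIM(real))) {a..t}"
  proof (rule has_integral_cong[THEN iffD1, rotated])
    fix s
    show "L powr (p + q) * (((s - a) / L) powr q * ((t - s) / L) powr p) = (t - s) powr p * (s - a) powr q"
      using L by (simp add: powr_divide powr_add field_simps)
  qed
  moreover have "L powr (p + q) * (Beta (q + 1) (p + 1) /\<^sub>R (1 / L) ^ DIM(real))
      = L powr (p + q + 1) * Beta (q + 1) (p + 1)"
    using L by (simp add: powr_add)
  ultimately show ?thesis
    unfolding L_def by (simp only:)
qed

lemma has_integral_Riemann_Liouville_ramp:
  fixes p q a t :: real
  assumes p: "p > -1" and q: "q > -1" and a: "0 \<le> a" and t: "0 \<le> t"
  shows "((\<lambda>s. (t - s) powr p * ramp a q s) has_integral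
           Beta (q + 1) (p + 1) * ramp a (p + q + 1) t) {0..t}"
proof (cases "t \<le> a")
  case True
  have "((\<lambda>s. (t - s) powr p * ramp a q s) has_integral 0) {0..t}"
    by (rule has_integral_cong[THEN iffD1, OF _ has_integral_0]) (use True in \<open>auto simp: ramp_eq_0\<close>)
  then show ?thesis
    using True by (simp add: ramp_eq_0)
next
  case False
  have "((\<lambda>s. (t - s) powr p * ramp a q s) has_integral 0) {0..a}"
    by (rule has_integral_cong[THEN iffD1, OF _ has_integral_0]) (auto simp: ramp_eq_0)
  moreover have "((\<lambda>s. (t - s) powr p * ramp a q s) has_integral
      (t - a) powr (p + q + 1) * Beta (q + 1) (p + 1)) {a..t}"
    by (rule has_integral_cong[THEN iffD1, OF _ has_integral_Beta_shifted[OF p q]])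
       (use False in \<open>auto simp: ramp_eq_powr\<close>)
  ultimately have "((\<lambda>s. (t - s) powr p * ramp a q s) has_integral
      0 + (t - a) powr (p + q + 1) * Beta (q + 1) (p + 1)) {0..t}"
    using False a by (intro has_integral_combine) auto
  then show ?thesis
    using False by (simp add: ramp_eq_powr mult.commute)
qed

lemma Beta_right_1:
  fixes q :: real
  assumes "q > -1"
  shows "Beta (q + 1) 1 = 1 / (q + 1)"
proof -
  have "q + 1 \<notin> \<int>\<^sub>\<le>\<^sub>0"
    using assms by auto
  then have "Gamma (q + 1 + 1) = (q + 1) * Gamma (q + 1)"
    by (rule Gamma_plus1)
  moreover have "Gamma (q + 1) > 0"
    using assms by simp
  ultimately show ?thesis
    by (simp add: Beta_def)
qed

lemma has_integral_ramp:
  assumes "q > -1" and "0 \<le> a" and "0 \<le> t"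
  shows "(ramp a q has_integral ramp a (q + 1) t / (q + 1)) {0..t}"
proof -
  have "((\<lambda>s. (t - s) powr 0 * ramp a q s) has_integral ramp a (q + 1) t / (q + 1)) {0..t}"
    using has_integral_Riemann_Liouville_ramp[of 0 q a t] Beta_right_1[of q] assms by simp
  then show ?thesis
    by (rule has_integral_spike_finite[of "{t}", rotated 2]) auto
qed

lemma ramp_integrable_on:
  assumes "q > -1" and "0 \<le> a" and "0 \<le> t"
  shows "ramp a q integrable_on {0..t}"
  using has_integral_ramp[OF assms] by blast

section \<open>Combinations of ramps in the Cameron--Martin space\<close>

definition ramp_comb :: "'i set \<Rightarrow> ('i \<Rightarrow> real) \<Rightarrow> ('i \<Rightarrow> 'a::real_vector) \<Rightarrow> real \<Rightarrow> real \<Rightarrow> 'a" where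
  "ramp_comb I a d q t = (\<Sum>i\<in>I. ramp (a i) q t *\<^sub>R d i)"

lemma ramp_comb_scaleR: "ramp_comb I a (\<lambda>i. c *\<^sub>R d i) q t = c *\<^sub>R ramp_comb I a d q t"
  by (simp add: ramp_comb_def scaleR_sum_right mult.commute)

context
  fixes I :: "'i set" and a :: "'i \<Rightarrow> real" and d :: "'i \<Rightarrow> 'a::euclidean_space"
  assumes finite: "finite I" and nonneg: "\<And>i. i \<in> I \<Longrightarrow> 0 \<le> a i"
begin

lemma has_integral_ramp_comb:
  assumes "q > -1" and "0 \<le> t"
  shows "(ramp_comb I a d q has_integral ramp_comb I a d (q + 1) t /\<^sub>R (q + 1)) {0..t}"
  unfolding ramp_comb_def scaleR_sum_right scaleR_scaleR
  by (intro has_integral_sum finite has_integral_scaleR_left)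
     (use has_integral_ramp assms nonneg in \<open>auto simp: divide_inverse_commute\<close>)

lemma prim_ramp_comb:
  assumes "q > -1" and "0 \<le> t"
  shows "prim (ramp_comb I a d q) t = ramp_comb I a d (q + 1) t /\<^sub>R (q + 1)"
  unfolding prim_def using has_integral_ramp_comb[OF assms] by (rule integral_unique)

lemma has_integral_Riemann_Liouville_ramp_comb:
  assumes "p > -1" and "q > -1" and "0 \<le> t"
  shows "((\<lambda>s. (t - s) powr p *\<^sub>R ramp_comb I a d q s) has_integral
           Beta (q + 1) (p + 1) *\<^sub>R ramp_comb I a d (p + q + 1) t) {0..t}"
  unfolding ramp_comb_def scaleR_sum_right scaleR_scaleR
  by (intro has_integral_sum finite has_integral_scaleR_left)
     (use has_integral_Riemann_Liouville_ramp assms nonneg in auto)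

lemma integral_Riemann_Liouville_prim_ramp_comb:
  assumes "p > -1" and "q > -1" and "0 \<le> t"
  shows "integral {0..t} (\<lambda>s. (t - s) powr p *\<^sub>R prim (ramp_comb I a d q) s) =
           (Beta (q + 2) (p + 1) / (q + 1)) *\<^sub>R ramp_comb I a d (p + q + 2) t"
proof -
  have "((\<lambda>s. (1 / (q + 1)) *\<^sub>R ((t - s) powr p *\<^sub>R ramp_comb I a d (q + 1) s)) has_integral
      (Beta (q + 2) (p + 1) / (q + 1)) *\<^sub>R ramp_comb I a d (p + q + 2) t) {0..t}"
    using has_integral_cmul[OF has_integral_Riemann_Liouville_ramp_comb[of p "q + 1" t], of "1 / (q + 1)"]
      assms by (simp add: algebra_simps)
  then have "((\<lambda>s. (t - s) powr p *\<^sub>R prim (ramp_comb I a d q) s) has_integral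
      (Beta (q + 2) (p + 1) / (q + 1)) *\<^sub>R ramp_comb I a d (p + q + 2) t) {0..t}"
    by (rule has_integral_cong[THEN iffD1, rotated]) (use assms in \<open>simp add: prim_ramp_comb divide_inverse\<close>)
  then show ?thesis
    by (rule integral_unique)
qed

end

lemma has_vector_derivative_ramp_comb_2:
  "(ramp_comb I a d 2 has_vector_derivative 2 *\<^sub>R ramp_comb I a d 1 t) (at t)"
  unfolding ramp_comb_def scaleR_sum_right scaleR_scaleR
proof (rule has_vector_derivative_sum)
  fix i
  show "((\<lambda>x. ramp (a i) 2 x *\<^sub>R d i) has_vector_derivative (2 * ramp (a i) 1 t) *\<^sub>R d i) (at t)"
    using has_vector_derivative_scaleR[OF has_real_derivative_ramp_2 has_vector_derivative_const] by simp
qed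

text \<open>
  The Beta factors come from the Riemann--Liouville integral of a ramp; for H \<le> 1/2 the
  extra 2 is the derivative of ramp a 2.
\<close>

definition KH_ramp_factor :: "real \<Rightarrow> real \<Rightarrow> real" where
  "KH_ramp_factor \<alpha> H = \<alpha> / (3/2 - H) *
     (if H > 1/2 then Beta (5/2 - H) (H - 1/2) else 2 * Beta (5/2 - H) (H + 1/2))"

lemma KH_ramp_factor_pos:
  assumes "0 < H" and "H < 1" and "\<alpha> > 0"
  shows "KH_ramp_factor \<alpha> H > 0"
  using assms by (auto simp: KH_ramp_factor_def Beta_def)

lemma KH_prim_ramp_comb:
  fixes I :: "'i set" and d :: "'i \<Rightarrow> 'a::euclidean_space"
  assumes "0 < H" and "H < 1" and "finite I" and "\<And>i. i \<in> I \<Longrightarrow> 0 \<le> a i" and "t \<in> {0..1}"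
  shows "KH \<alpha> H (prim (ramp_comb I a d (1/2 - H))) t = KH_ramp_factor \<alpha> H *\<^sub>R ramp_comb I a d 1 t"
proof (cases "H > 1/2")
  case True
  have "integral {0..t} (\<lambda>s. (t - s) powr (H - 3/2) *\<^sub>R prim (ramp_comb I a d (1/2 - H)) s) =
      (Beta (5/2 - H) (H - 1/2) / (3/2 - H)) *\<^sub>R ramp_comb I a d 1 t"
    using integral_Riemann_Liouville_prim_ramp_comb[OF assms(3,4),
      where d = d and p = "H - 3/2" and q = "1/2 - H" and t = t] True assms
    by (simp add: algebra_simps)
  with True show ?thesis
    by (simp add: KH_def KH_ramp_factor_def)
next
  case False
  define F where "F \<tau> = integral {0..\<tau>} (\<lambda>s. (\<tau> - s) powr (H - 1/2) *\<^sub>R prim (ramp_comb I a d (1/2 - H)) s)"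
    for \<tau>
  define c where "c = Beta (5/2 - H) (H + 1/2) / (3/2 - H)"
  have "F \<tau> = ramp_comb I a (\<lambda>i. c *\<^sub>R d i) 2 \<tau>" if "\<tau> \<in> {0..1}" for \<tau>
    using integral_Riemann_Liouville_prim_ramp_comb[OF assms(3,4),
      where d = d and p = "H - 1/2" and q = "1/2 - H" and t = \<tau>] that assms
    by (simp add: F_def c_def ramp_comb_scaleR algebra_simps)
  then have "(F has_vector_derivative 2 *\<^sub>R ramp_comb I a (\<lambda>i. c *\<^sub>R d i) 1 t) (at t within {0..1})"
    by (rule has_vector_derivative_transform[OF assms(5) _
        has_vector_derivative_at_within[OF has_vector_derivative_ramp_comb_2]]) auto
  then have "vector_derivative F (at t within {0..1}) = 2 *\<^sub>R ramp_comb I a (\<lambda>i. c *\<^sub>R d i) 1 t"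
    using assms(5) by (intro vector_derivative_within_cbox[of 0 1, simplified]) auto
  with False show ?thesis
    by (simp add: KH_def KH_ramp_factor_def F_def[abs_def] c_def ramp_comb_scaleR)
qed

lemma norm_ramp_comb_power2_le:
  assumes "finite I" and "\<And>i. i \<in> I \<Longrightarrow> norm (d i) \<le> K"
  shows "(norm (ramp_comb I a d q s))\<^sup>2 \<le> real (card I) * K\<^sup>2 * (\<Sum>i\<in>I. ramp (a i) (2 * q) s)"
proof -
  have "norm (ramp_comb I a d q s) \<le> (\<Sum>i\<in>I. norm (ramp (a i) q s *\<^sub>R d i))"
    unfolding ramp_comb_def by (rule norm_sum)
  also have "\<dots> \<le> (\<Sum>i\<in>I. ramp (a i) q s * K)"
    using assms(2) by (intro sum_mono) (simp add: ramp_nonneg mult_left_mono)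
  finally have "(norm (ramp_comb I a d q s))\<^sup>2 \<le> (\<Sum>i\<in>I. ramp (a i) q s * K)\<^sup>2"
    by (rule power_mono) simp
  also have "\<dots> \<le> (\<Sum>i\<in>I. (ramp (a i) q s * K)\<^sup>2) * card I"
    by (rule sum_squared_le_sum_of_squares)
  also have "\<dots> = real (card I) * K\<^sup>2 * (\<Sum>i\<in>I. ramp (a i) (2 * q) s)"
    by (simp add: power_mult_distrib ramp_power2 sum_distrib_left mult_ac)
  finally show ?thesis .
qed

lemma has_integral_sum_ramp:
  assumes "finite I" and "\<And>i. i \<in> I \<Longrightarrow> 0 \<le> a i" and "r > -1"
  shows "((\<lambda>s. \<Sum>i\<in>I. ramp (a i) r s) has_integral (\<Sum>i\<in>I. ramp (a i) (r + 1) 1 / (r + 1))) {0..1}"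
  using assms by (intro has_integral_sum has_integral_ramp) auto

context
  fixes I :: "'i set" and a :: "'i \<Rightarrow> real" and d :: "'i \<Rightarrow> 'a::euclidean_space" and q :: real
  assumes finite: "finite I" and nonneg: "\<And>i. i \<in> I \<Longrightarrow> 0 \<le> a i" and q: "q > -1/2"
begin

lemma norm_ramp_comb_power2_integrable:
  "(\<lambda>s. (norm (ramp_comb I a d q s))\<^sup>2) integrable_on {0..1}"
proof -
  have integrable: "ramp_comb I a d q integrable_on {0..1}"
    unfolding ramp_comb_def
    using q nonneg by (intro integrable_sum finite integrable_on_scaleR_left ramp_integrable_on) auto
  have measurable: "(\<lambda>s. (norm (ramp_comb I a d q s))\<^sup>2) \<in> borel_measurable (lebesgue_on {0..1})"
    using integrable_imp_measurable[OF integrable] by measurable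
  define K where "K = (\<Sum>i\<in>I. norm (d i))"
  have "norm (d i) \<le> K" if "i \<in> I" for i
    unfolding K_def using finite that by (intro member_le_sum) auto
  then have bound: "(norm (ramp_comb I a d q s))\<^sup>2 \<le> real (card I) * K\<^sup>2 * (\<Sum>i\<in>I. ramp (a i) (2 * q) s)"
    for s
    by (intro norm_ramp_comb_power2_le finite)
  have "(\<lambda>s. \<Sum>i\<in>I. ramp (a i) (2 * q) s) integrable_on {0..1}"
    using finite nonneg q has_integral_sum_ramp[of I a "2 * q"] by auto
  then have "(\<lambda>s. real (card I) * K\<^sup>2 * (\<Sum>i\<in>I. ramp (a i) (2 * q) s)) integrable_on {0..1}"
    by (rule integrable_on_mult_right)
  from measurable_bounded_by_integrable_imp_integrable[OF measurable this] bound show ?thesis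
    by auto
qed

lemma L2_01_ramp_comb: "L2_01 (ramp_comb I a d q)"
proof -
  have "ramp_comb I a d q absolutely_integrable_on {0..1}"
    unfolding ramp_comb_def
    using q nonneg
    by (intro absolutely_integrable_sum finite absolutely_integrable_scaleR_right
        nonnegative_absolutely_integrable_1 ramp_integrable_on) (auto simp: ramp_nonneg)
  with norm_ramp_comb_power2_integrable show ?thesis
    unfolding L2_01_def by blast
qed

lemma L2_norm01_ramp_comb_le:
  assumes "0 \<le> K" and K: "\<And>i. i \<in> I \<Longrightarrow> norm (d i) \<le> K"
  shows "L2_norm01 (ramp_comb I a d q) \<le> K * real (card I) / sqrt (2 * q + 1)"
proof -
  have majorant: "((\<lambda>s. real (card I) * K\<^sup>2 * (\<Sum>i\<in>I. ramp (a i) (2 * q) s)) has_integral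
      real (card I) * K\<^sup>2 * (\<Sum>i\<in>I. ramp (a i) (2 * q + 1) 1 / (2 * q + 1))) {0..1}"
  proof -
    have "((\<lambda>s. \<Sum>i\<in>I. ramp (a i) (2 * q) s) has_integral
        (\<Sum>i\<in>I. ramp (a i) (2 * q + 1) 1 / (2 * q + 1))) {0..1}"
      using finite nonneg q by (intro has_integral_sum_ramp) auto
    from has_integral_mult_right[OF this, of "real (card I) * K\<^sup>2"] show ?thesis
      by (simp only:)
  qed
  have "integral {0..1} (\<lambda>s. (norm (ramp_comb I a d q s))\<^sup>2) \<le>
      integral {0..1} (\<lambda>s. real (card I) * K\<^sup>2 * (\<Sum>i\<in>I. ramp (a i) (2 * q) s))"
    using norm_ramp_comb_power2_integrable majorant norm_ramp_comb_power2_le[where d = d and K = K, OF finite K]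
    by (intro integral_le) auto
  also have "\<dots> \<le> real (card I) * K\<^sup>2 * (\<Sum>i\<in>I. 1 / (2 * q + 1))"
    unfolding integral_unique[OF majorant]
    using q nonneg by (intro mult_left_mono sum_mono divide_right_mono ramp_le_1) auto
  also have "\<dots> = (K * real (card I) / sqrt (2 * q + 1))\<^sup>2"
    using q by (simp add: power_mult_distrib power_divide power2_eq_square)
  finally show ?thesis
    unfolding L2_norm01_def using assms q by (intro real_le_lsqrt) auto
qed

end

lemma L2_norm01_nonneg: "0 \<le> L2_norm01 g"
  unfolding L2_norm01_def
  by (cases "(\<lambda>s. (norm (g s))\<^sup>2) integrable_on {0..1}")
     (auto simp: not_integrable_integral intro!: integral_nonneg)

lemma CM_memberI:
  assumes "L2_01 g" and "\<forall>t\<in>{0..1}. h t = KH \<alpha> H (prim g) t"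
  shows "h \<in> CM \<alpha> H"
  using assms unfolding CM_def by blast

lemma CM_norm_le_L2_norm01:
  assumes "L2_01 g" and "\<forall>t\<in>{0..1}. h t = KH \<alpha> H (prim g) t"
  shows "CM_norm \<alpha> H h \<le> L2_norm01 g"
  unfolding CM_norm_def using assms
  by (intro cInf_lower bdd_belowI[where m = 0]) (auto simp: L2_norm01_nonneg)

lemma ramp_comb_in_CM:
  fixes I :: "'i set" and d :: "'i \<Rightarrow> 'a::euclidean_space"
  assumes H: "0 < H" "H < 1" and "\<alpha> > 0"
    and "finite I" and "\<And>i. i \<in> I \<Longrightarrow> 0 \<le> a i"
    and "0 \<le> K" and "\<And>i. i \<in> I \<Longrightarrow> norm (d i) \<le> K"
    and f: "\<forall>t\<in>{0..1}. f t = ramp_comb I a d 1 t"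
  shows "f \<in> CM \<alpha> H \<and>
    CM_norm \<alpha> H f \<le> K * real (card I) / (KH_ramp_factor \<alpha> H * sqrt (2 - 2 * H))"
proof -
  define c where "c = KH_ramp_factor \<alpha> H"
  have c: "c > 0"
    unfolding c_def using H \<open>\<alpha> > 0\<close> by (rule KH_ramp_factor_pos)
  define g where "g = ramp_comb I a (\<lambda>i. d i /\<^sub>R c) (1/2 - H)"
  have KHg: "\<forall>t\<in>{0..1}. f t = KH \<alpha> H (prim g) t"
  proof
    fix t :: real assume "t \<in> {0..1}"
    with KH_prim_ramp_comb[where a = a and d = "\<lambda>i. d i /\<^sub>R c" and \<alpha> = \<alpha>, OF H assms(4,5)] f c
    show "f t = KH \<alpha> H (prim g) t"
      by (simp add: g_def c_def ramp_comb_scaleR)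
  qed
  have norm_d: "norm (d i /\<^sub>R c) \<le> K / c" if "i \<in> I" for i
    using assms(7)[OF that] c by (simp add: divide_right_mono divide_inverse_commute)
  have "L2_01 g"
    unfolding g_def using assms(4,5) H by (intro L2_01_ramp_comb) auto
  moreover have "L2_norm01 g \<le> K / c * real (card I) / sqrt (2 * (1/2 - H) + 1)"
    unfolding g_def using assms(4,5,6) norm_d H c by (intro L2_norm01_ramp_comb_le) auto
  ultimately show ?thesis
    using KHg CM_memberI CM_norm_le_L2_norm01 by (fastforce simp: c_def algebra_simps)
qed

section \<open>Piecewise linear functions as sums of ramps\<close>

lemma has_vector_derivative_affine:
  "((\<lambda>x. c + (x - a) *\<^sub>R v) has_vector_derivative v) (at t within S)"
proof -
  have "((\<lambda>x. x - a) has_real_derivative 1) (at t within S)"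
    using DERIV_diff[OF DERIV_ident DERIV_const[of a]] by simp
  from has_vector_derivative_scaleR[OF this has_vector_derivative_const[of v]]
  show ?thesis
    using has_vector_derivative_add[OF has_vector_derivative_const[of c]] by fastforce
qed

locale affine_partition =
  fixes f :: "real \<Rightarrow> 'a::euclidean_space" and T :: "nat \<Rightarrow> real" and m :: nat and b :: "nat \<Rightarrow> 'a"
  assumes T_strict_mono: "strict_mono_on {..m} T"
    and T_0: "T 0 = 0" and T_m: "T m = 1"
    and affine_on_pieces: "\<And>i t. i < m \<Longrightarrow> t \<in> {T i..T (Suc i)} \<Longrightarrow> f t = f (T i) + (t - T i) *\<^sub>R b i"
begin

lemma T_less_iff: "i \<le> m \<Longrightarrow> j \<le> m \<Longrightarrow> T i < T j \<longleftrightarrow> i < j"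
  using T_strict_mono by (simp add: strict_mono_on_less)

lemma T_le_iff: "i \<le> m \<Longrightarrow> j \<le> m \<Longrightarrow> T i \<le> T j \<longleftrightarrow> i \<le> j"
  using T_strict_mono by (simp add: strict_mono_on_less_eq)

lemma m_pos: "0 < m"
  using T_0 T_m by (cases m) auto

lemma T_in_01: "i \<le> m \<Longrightarrow> T i \<in> {0..1}"
  using T_le_iff[of 0 i] T_le_iff[of i m] T_0 T_m by auto

lemma piece_containing:
  assumes "t \<in> {0..1}"
  obtains i where "i < m" and "t \<in> {T i..T (Suc i)}"
proof -
  have cover: "\<exists>i<j. t \<in> {T i..T (Suc i)}" if "0 < j" and "j \<le> m" and "t \<le> T j" for j
    using that
  proof (induction j)
    case 0
    then show ?case
      by simp
  next
    case (Suc j)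
    show ?case
    proof (cases "0 < j \<and> t \<le> T j")
      case True
      with Suc obtain i where "i < j" "t \<in> {T i..T (Suc i)}"
        by auto
      then show ?thesis
        using less_SucI by blast
    next
      case False
      then have "T j \<le> t"
        using assms T_0 by auto
      with Suc.prems show ?thesis
        by auto
    qed
  qed
  obtain i where "i < m" "t \<in> {T i..T (Suc i)}"
    using cover[of m] assms m_pos T_m by auto
  then show ?thesis
    by (rule that)
qed

lemma has_vector_derivative_on_piece:
  assumes "i < m" and "t \<in> {T i<..<T (Suc i)}"
  shows "(f has_vector_derivative b i) (at t)"
  using has_vector_derivative_affine
  by (rule has_vector_derivative_transform_within_open[of _ _ _ "{T i<..<T (Suc i)}"])
     (use assms in \<open>auto intro!: affine_on_pieces[symmetric]\<close>)

lemma fdot_on_piece: "i < m \<Longrightarrow> t \<in> {T i<..<T (Suc i)} \<Longrightarrow> fdot f t = b i"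
  unfolding fdot_def by (rule vector_derivative_at[OF has_vector_derivative_on_piece])

lemma fdot_in_slopes:
  assumes "t \<in> {0<..<1}" and "f differentiable (at t)"
  shows "\<exists>i<m. fdot f t = b i"
proof -
  from assms(1) have "t \<in> {0..1}"
    by auto
  then obtain i where i: "i < m" "t \<in> {T i..T (Suc i)}"
    by (rule piece_containing)
  have "(f has_vector_derivative fdot f t) (at t)"
    using assms(2) unfolding fdot_def vector_derivative_works .
  then have "(f has_vector_derivative fdot f t) (at t within {T i..T (Suc i)})"
    by (rule has_vector_derivative_at_within)
  moreover have "(f has_vector_derivative b i) (at t within {T i..T (Suc i)})"
    by (rule has_vector_derivative_transform[OF _ _ has_vector_derivative_affine])
       (use i in \<open>auto intro!: affine_on_pieces\<close>)
  ultimately have "fdot f t = b i"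
    using i T_less_iff[of i "Suc i"]
    by (intro vector_derivative_unique_within_closed_interval[of "T i" "T (Suc i)"]) auto
  with i show ?thesis
    by blast
qed

lemma norm_slope_le_sup_fdot:
  assumes "i < m"
  shows "norm (b i) \<le> sup_fdot f"
proof -
  define X where "X = {norm (fdot f t) | t. t \<in> {0<..<1} \<and> f differentiable (at t)}"
  have "X \<subseteq> (\<lambda>i. norm (b i)) ` {..<m}"
    unfolding X_def using fdot_in_slopes by fastforce
  then have "bdd_above X"
    by (meson bdd_above_finite finite_imageI finite_lessThan finite_subset)
  moreover have "norm (b i) \<in> X"
  proof -
    define t where "t = (T i + T (Suc i)) / 2"
    have "T i < T (Suc i)"
      using assms T_less_iff by simp
    then have t: "t \<in> {T i<..<T (Suc i)}"
      by (simp add: t_def)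
    moreover have "T 0 \<le> T i" "T (Suc i) \<le> T m"
      using assms T_le_iff by auto
    ultimately have "t \<in> {0<..<1}"
      using T_0 T_m by auto
    moreover have "f differentiable (at t)"
      using has_vector_derivative_on_piece[OF assms t] by (rule differentiableI_vector)
    ultimately show ?thesis
      unfolding X_def using fdot_on_piece[OF assms t] by force
  qed
  ultimately show ?thesis
    unfolding sup_fdot_def X_def[symmetric] by (simp add: cSup_upper)
qed

lemma sup_fdot_nonneg: "0 \<le> sup_fdot f"
  using norm_ge_zero norm_slope_le_sup_fdot[OF m_pos] by (rule order_trans)

lemma disc_fdot_subset: "disc_fdot f \<subseteq> T ` {..m}"
proof
  fix t assume t: "t \<in> disc_fdot f"
  show "t \<in> T ` {..m}"
  proof (rule ccontr)
    assume not_breakpoint: "t \<notin> T ` {..m}"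
    from t have "t \<in> {0..1}"
      by (auto simp: disc_fdot_def)
    then obtain i where i: "i < m" "t \<in> {T i..T (Suc i)}"
      by (rule piece_containing)
    have "T i \<noteq> t" "T (Suc i) \<noteq> t"
      using i(1) not_breakpoint by auto
    with i have piece: "t \<in> {T i<..<T (Suc i)}"
      by auto
    have "eventually (\<lambda>x. fdot f x = b i) (at t)"
      unfolding eventually_at_topological
      by (rule exI[of _ "{T i<..<T (Suc i)}"]) (use piece fdot_on_piece[OF i(1)] in auto)
    then have "isCont (fdot f) t"
      unfolding isCont_def fdot_on_piece[OF i(1) piece] by (rule tendsto_eventually)
    with t show False
      by (simp add: disc_fdot_def)
  qed
qed

lemma finite_disc_fdot: "finite (disc_fdot f)"
  using disc_fdot_subset by (rule finite_subset) simp

lemma breakpoint_in_disc_fdot: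
  assumes "0 < i" and "i < m" and "b i \<noteq> b (i - 1)"
  shows "T i \<in> disc_fdot f"
proof -
  have bounds: "T 0 < T i" "T i < T m" "T (i - 1) < T i" "T i < T (Suc i)"
    using assms T_less_iff by auto
  then have "T i \<in> {0<..<1}"
    using T_0 T_m by simp
  moreover have "\<not> isCont (fdot f) (T i)"
  proof
    assume "isCont (fdot f) (T i)"
    then have right: "(fdot f \<longlongrightarrow> fdot f (T i)) (at_right (T i))"
      and left: "(fdot f \<longlongrightarrow> fdot f (T i)) (at_left (T i))"
      by (auto simp: isCont_def filterlim_at_split)
    have "eventually (\<lambda>x. fdot f x = b i) (at_right (T i))"
      unfolding eventually_at_right[OF \<open>T i < T (Suc i)\<close>]
      by (intro exI[of _ "T (Suc i)"]) (use assms bounds fdot_on_piece in auto)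
    then have "fdot f (T i) = b i"
      by (rule tendsto_unique[OF trivial_limit_at_right_real right tendsto_eventually])
    moreover have "eventually (\<lambda>x. fdot f x = b (i - 1)) (at_left (T i))"
      unfolding eventually_at_left[OF \<open>T (i - 1) < T i\<close>]
      by (intro exI[of _ "T (i - 1)"]) (use assms bounds fdot_on_piece[of "i - 1"] in auto)
    then have "fdot f (T i) = b (i - 1)"
      by (rule tendsto_unique[OF trivial_limit_at_left_real left tendsto_eventually])
    ultimately show False
      using assms by simp
  qed
  ultimately show ?thesis
    by (simp add: disc_fdot_def)
qed

definition slope_jump :: "nat \<Rightarrow> 'a" where
  "slope_jump i = b i - (if i = 0 then 0 else b (i - 1))"

lemma sum_slope_jumps_on_piece:
  assumes "k < m"
  shows "f 0 + (\<Sum>i<Suc k. (t - T i) *\<^sub>R slope_jump i) = f (T k) + (t - T k) *\<^sub>R b k"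
  using assms
proof (induction k)
  case 0
  then show ?case
    using T_0 by (simp add: slope_jump_def)
next
  case (Suc k)
  then have k: "k < m"
    by simp
  have "f 0 + (\<Sum>i<Suc (Suc k). (t - T i) *\<^sub>R slope_jump i) =
      (f 0 + (\<Sum>i<Suc k. (t - T i) *\<^sub>R slope_jump i)) + (t - T (Suc k)) *\<^sub>R slope_jump (Suc k)"
    by (simp add: add.assoc)
  also have "\<dots> = f (T k) + (t - T k) *\<^sub>R b k + (t - T (Suc k)) *\<^sub>R (b (Suc k) - b k)"
    using Suc.IH[OF k] by (simp add: slope_jump_def)
  also have "f (T k) = f (T (Suc k)) - (T (Suc k) - T k) *\<^sub>R b k"
    using k T_le_iff[of k "Suc k"] affine_on_pieces[of k "T (Suc k)"] by simp
  finally show ?case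
    by (simp add: algebra_simps)
qed

lemma eq_ramp_comb_slope_jumps:
  assumes "t \<in> {0..1}"
  shows "f t = f 0 + ramp_comb {..<m} T slope_jump 1 t"
proof -
  obtain k where k: "k < m" "t \<in> {T k..T (Suc k)}"
    using assms by (rule piece_containing)
  have "ramp_comb {..<m} T slope_jump 1 t = (\<Sum>i<Suc k. ramp (T i) 1 t *\<^sub>R slope_jump i)"
    unfolding ramp_comb_def
  proof (rule sum.mono_neutral_right)
    show "\<forall>i\<in>{..<m} - {..<Suc k}. ramp (T i) 1 t *\<^sub>R slope_jump i = 0"
    proof
      fix i assume "i \<in> {..<m} - {..<Suc k}"
      then have "t \<le> T i"
        using k T_le_iff[of "Suc k" i] by auto
      then show "ramp (T i) 1 t *\<^sub>R slope_jump i = 0"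
        by (simp add: ramp_eq_0)
    qed
  qed (use k in auto)
  also have "\<dots> = (\<Sum>i<Suc k. (t - T i) *\<^sub>R slope_jump i)"
  proof (rule sum.cong[OF refl])
    fix i assume "i \<in> {..<Suc k}"
    then have "T i \<le> t"
      using k T_le_iff[of i k] by auto
    then show "ramp (T i) 1 t *\<^sub>R slope_jump i = (t - T i) *\<^sub>R slope_jump i"
      by (simp add: ramp_eq_powr)
  qed
  finally have "f 0 + ramp_comb {..<m} T slope_jump 1 t = f 0 + (\<Sum>i<Suc k. (t - T i) *\<^sub>R slope_jump i)"
    by simp
  also have "\<dots> = f (T k) + (t - T k) *\<^sub>R b k"
    by (rule sum_slope_jumps_on_piece[OF k(1)])
  also have "\<dots> = f t"
    using affine_on_pieces[OF k] by simp
  finally show ?thesis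
    by simp
qed

lemma norm_slope_jump_le:
  assumes "i < m"
  shows "norm (slope_jump i) \<le> 2 * sup_fdot f"
proof (cases "i = 0")
  case True
  then show ?thesis
    using norm_slope_le_sup_fdot[OF assms] sup_fdot_nonneg by (simp add: slope_jump_def)
next
  case False
  then have "norm (slope_jump i) \<le> norm (b i) + norm (b (i - 1))"
    by (simp add: slope_jump_def norm_triangle_ineq4)
  also have "\<dots> \<le> 2 * sup_fdot f"
    using assms norm_slope_le_sup_fdot[of i] norm_slope_le_sup_fdot[of "i - 1"] by fastforce
  finally show ?thesis .
qed

lemma card_slope_jumps_le: "card {i. i < m \<and> slope_jump i \<noteq> 0} \<le> 1 + card (disc_fdot f)"
proof -
  define K where "K = {i. 0 < i \<and> i < m \<and> b i \<noteq> b (i - 1)}"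
  have "finite K"
    by (rule finite_subset[of K "{..<m}"]) (auto simp: K_def)
  have "inj_on T K"
    by (rule inj_on_subset[OF strict_mono_on_imp_inj_on[OF T_strict_mono]]) (auto simp: K_def)
  have "card {i. i < m \<and> slope_jump i \<noteq> 0} \<le> card (insert 0 K)"
    using \<open>finite K\<close> by (intro card_mono) (auto simp: K_def slope_jump_def)
  also have "\<dots> \<le> 1 + card K"
    using \<open>finite K\<close> by (simp add: card_insert_if)
  also have "card K = card (T ` K)"
    using \<open>inj_on T K\<close> by (rule card_image[symmetric])
  also have "\<dots> \<le> card (disc_fdot f)"
    using breakpoint_in_disc_fdot by (intro card_mono finite_disc_fdot) (auto simp: K_def)
  finally show ?thesis
    by simp
qed

lemma eq_ramp_comb_nonzero_slope_jumps:
  assumes "f 0 = 0" and "t \<in> {0..1}"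
  shows "f t = ramp_comb {i. i < m \<and> slope_jump i \<noteq> 0} T slope_jump 1 t"
proof -
  have "ramp_comb {..<m} T slope_jump 1 t = ramp_comb {i. i < m \<and> slope_jump i \<noteq> 0} T slope_jump 1 t"
    unfolding ramp_comb_def by (rule sum.mono_neutral_right) auto
  with eq_ramp_comb_slope_jumps[OF assms(2)] assms(1) show ?thesis
    by simp
qed

lemma CM_norm_le_sup_fdot:
  assumes "0 < H" and "H < 1" and "\<alpha> > 0" and "f 0 = 0"
  shows "f \<in> CM \<alpha> H \<and> CM_norm \<alpha> H f \<le>
    2 * sup_fdot f * (1 + real (card (disc_fdot f))) / (KH_ramp_factor \<alpha> H * sqrt (2 - 2 * H))"
proof -
  define I where "I = {i. i < m \<and> slope_jump i \<noteq> 0}"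
  have I: "finite I" "\<And>i. i \<in> I \<Longrightarrow> 0 \<le> T i" "\<And>i. i \<in> I \<Longrightarrow> norm (slope_jump i) \<le> 2 * sup_fdot f"
    using T_in_01 norm_slope_jump_le by (auto simp: I_def)
  have "\<forall>t\<in>{0..1}. f t = ramp_comb I T slope_jump 1 t"
    using eq_ramp_comb_nonzero_slope_jumps[OF assms(4)] by (simp add: I_def)
  with ramp_comb_in_CM[OF assms(1-3) I(1,2) _ I(3)] sup_fdot_nonneg
  have "f \<in> CM \<alpha> H \<and>
      CM_norm \<alpha> H f \<le> 2 * sup_fdot f * real (card I) / (KH_ramp_factor \<alpha> H * sqrt (2 - 2 * H))"
    by simp
  moreover have "real (card I) \<le> 1 + real (card (disc_fdot f))"
    using card_slope_jumps_le by (simp add: I_def)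
  then have "2 * sup_fdot f * real (card I) \<le> 2 * sup_fdot f * (1 + real (card (disc_fdot f)))"
    using sup_fdot_nonneg by (intro mult_left_mono) auto
  moreover have "0 < KH_ramp_factor \<alpha> H * sqrt (2 - 2 * H)"
    using KH_ramp_factor_pos[OF assms(1-3)] assms(2) by simp
  ultimately show ?thesis
    by (meson divide_right_mono less_imp_le order_trans)
qed

end

lemma piecewise_linear01_imp_affine_partition:
  assumes "piecewise_linear01 f"
  shows "\<exists>T m b. affine_partition f T m b"
proof -
  obtain ts :: "real list" where len: "length ts \<ge> 2" and sorted: "sorted_wrt (<) ts"
    and hd: "hd ts = 0" and last: "last ts = 1"
    and affine: "\<forall>i < length ts - 1. \<exists>c v. \<forall>t\<in>{ts!i..ts!(i+1)}. f t = c + t *\<^sub>R v"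
    using assms unfolding piecewise_linear01_def by blast
  define T where "T i = ts ! i" for i
  define m where "m = length ts - 1"
  have mono: "strict_mono_on {..m} T"
    using sorted by (intro strict_mono_onI) (auto simp: T_def m_def sorted_wrt_iff_nth_less)
  have "\<forall>i. \<exists>v. i < m \<longrightarrow> (\<forall>t\<in>{T i..T (Suc i)}. f t = f (T i) + (t - T i) *\<^sub>R v)"
  proof
    fix i
    show "\<exists>v. i < m \<longrightarrow> (\<forall>t\<in>{T i..T (Suc i)}. f t = f (T i) + (t - T i) *\<^sub>R v)"
    proof (cases "i < m")
      case True
      then obtain c v where cv: "\<forall>t\<in>{T i..T (Suc i)}. f t = c + t *\<^sub>R v"
        using affine unfolding T_def m_def by (metis Suc_eq_plus1)
      have "T i \<le> T (Suc i)"
        using mono True by (simp add: strict_mono_on_less_eq)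
      with cv show ?thesis
        by (intro exI[of _ v]) (auto simp: algebra_simps)
    qed simp
  qed
  then obtain b where b: "\<forall>i. i < m \<longrightarrow> (\<forall>t\<in>{T i..T (Suc i)}. f t = f (T i) + (t - T i) *\<^sub>R b i)"
    by (metis choice)
  have "ts \<noteq> []"
    using len by auto
  then have "T 0 = 0" "T m = 1"
    using hd last by (simp_all add: T_def m_def hd_conv_nth last_conv_nth)
  with mono b have "affine_partition f T m b"
    by (intro affine_partition.intro) blast+
  then show ?thesis
    by blast
qed

theorem lemma3p11:
  fixes \<alpha> H :: real
  assumes "0 < H" and "H < 1" and "\<alpha> > 0"
  shows "\<exists>C>0. \<forall>f :: real \<Rightarrow> real ^ 'n.
           piecewise_linear01 f \<and> f 0 = 0 \<longrightarrow>
             f \<in> CM \<alpha> H \<and>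
             CM_norm \<alpha> H f \<le> C * sup_fdot f * (1 + real (card (disc_fdot f)))"
proof (intro exI[of _ "2 / (KH_ramp_factor \<alpha> H * sqrt (2 - 2 * H))"] conjI allI impI)
  show "2 / (KH_ramp_factor \<alpha> H * sqrt (2 - 2 * H)) > 0"
    using assms KH_ramp_factor_pos by simp
  fix f :: "real \<Rightarrow> real ^ 'n"
  assume f: "piecewise_linear01 f \<and> f 0 = 0"
  then obtain T m b where "affine_partition f T m b"
    using piecewise_linear01_imp_affine_partition by blast
  then have "f \<in> CM \<alpha> H \<and> CM_norm \<alpha> H f \<le>
      2 * sup_fdot f * (1 + real (card (disc_fdot f))) / (KH_ramp_factor \<alpha> H * sqrt (2 - 2 * H))"
    using assms f by (intro affine_partition.CM_norm_le_sup_fdot) auto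
  then show "f \<in> CM \<alpha> H"
    and "CM_norm \<alpha> H f \<le> 2 / (KH_ramp_factor \<alpha> H * sqrt (2 - 2 * H)) *
      sup_fdot f * (1 + real (card (disc_fdot f)))"
    by simp_all
qed

end
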